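(* Let $G$ be a finite group and let $x_1, \dots, x_n \in G$ be representatives of the distinct rational classes of $G$. Let $\chi \subseteq \{x_1, \dots, x_n\}$ be a largest subset such that for any two distinct $x_i, x_j \in \chi$ we have $\mathrm{Sol}_G(x_i) \neq \mathrm{Sol}_G(x_j)^g$ for all $g \in G$. Then $$|\mathrm{Solv}(G)| = \sum_{x \in \chi} [G : N_G(\mathrm{Sol}_G(x))].$$
   Context: For a finite group $G$ and $x \in G$, the solvabilizer of $x$ in $G$ is $\mathrm{Sol}_G(x) = \{y \in G : \langle x, y \rangle \text{ is solvable}\}$; $\mathrm{Solv}(G) = \{\mathrm{Sol}_G(x) : x \in G\}$ is the set of distinct solvabilizers. The rational class of $x \in G$ is the union of the conjugacy classes $(x^i)^G$ over all integers $i$ with $\gcd(|x|, i) = 1$. For a subset $X \subseteq G$ and $g \in G$, $X^g = \{g^{-1}xg : x \in X\}$, and $N_G(X) = \{g \in G : X^g = X\}$ is the normalizer of the subset $X$. *)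

theory Defs
  imports "HOL-Algebra.Algebra"
begin

definition solvabilizer :: "('a, 'b) monoid_scheme \<Rightarrow> 'a \<Rightarrow> 'a set" where
  "solvabilizer G x =
     {y \<in> carrier G. solvable (G\<lparr>carrier := generate G {x, y}\<rparr>)}"

definition Solv :: "('a, 'b) monoid_scheme \<Rightarrow> 'a set set" where
  "Solv G = solvabilizer G ` carrier G"

definition set_conj :: "('a, 'b) monoid_scheme \<Rightarrow> 'a set \<Rightarrow> 'a \<Rightarrow> 'a set" where
  "set_conj G S g = {inv\<^bsub>G\<^esub> g \<otimes>\<^bsub>G\<^esub> s \<otimes>\<^bsub>G\<^esub> g | s. s \<in> S}"

definition set_normalizer :: "('a, 'b) monoid_scheme \<Rightarrow> 'a set \<Rightarrow> 'a set" where
  "set_normalizer G S = {g \<in> carrier G. set_conj G S g = S}"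

definition conj_class :: "('a, 'b) monoid_scheme \<Rightarrow> 'a \<Rightarrow> 'a set" where
  "conj_class G x = {inv\<^bsub>G\<^esub> g \<otimes>\<^bsub>G\<^esub> x \<otimes>\<^bsub>G\<^esub> g | g. g \<in> carrier G}"

definition rational_class :: "('a, 'b) monoid_scheme \<Rightarrow> 'a \<Rightarrow> 'a set" where
  "rational_class G x =
     (\<Union>i \<in> {i::int. coprime (int (group.ord G x)) i}. conj_class G (x [^]\<^bsub>G\<^esub> i))"

definition index :: "('a, 'b) monoid_scheme \<Rightarrow> 'a set \<Rightarrow> nat" where
  "index G H = card (rcosets\<^bsub>G\<^esub> H)"

definition rational_class_reps :: "('a, 'b) monoid_scheme \<Rightarrow> 'a set \<Rightarrow> bool" where
  "rational_class_reps G R \<longleftrightarrow> R \<subseteq> carrier G \<and>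
     (\<forall>y \<in> carrier G. \<exists>!r. r \<in> R \<and> y \<in> rational_class G r)"

definition sol_nonconj :: "('a, 'b) monoid_scheme \<Rightarrow> 'a set \<Rightarrow> bool" where
  "sol_nonconj G T \<longleftrightarrow> (\<forall>a \<in> T. \<forall>b \<in> T. a \<noteq> b \<longrightarrow>
     (\<forall>g \<in> carrier G. solvabilizer G a \<noteq> set_conj G (solvabilizer G b) g))"

end

theory Submission
  imports Defs
begin

(* Conjugation by g is an automorphism of G, so it maps <x, y> onto <x^g, y^g>, whence
   Sol(x^g) = Sol(x)^g; and <x^i, y> = <x, y> whenever i is prime to |x|.  Hence the
   solvabilizer of every element of the rational class of x is conjugate to Sol(x), and
   Solv(G) is a union of orbits of G acting on its subsets by conjugation.  Maximality of
   \<chi> forces every such orbit to contain Sol(x) for some x in \<chi>, and the defining property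
   of \<chi> makes these orbits pairwise distinct.  So |Solv(G)| is the sum of their lengths,
   which are the indices [G : N_G(Sol(x))] by the orbit-stabilizer theorem. *)

lemma set_conj_eq_image: "set_conj G S g = (\<lambda>s. inv\<^bsub>G\<^esub> g \<otimes>\<^bsub>G\<^esub> s \<otimes>\<^bsub>G\<^esub> g) ` S"
  unfolding set_conj_def by auto

lemma (in group_hom) solvable_subgroup_img:
  assumes K: "subgroup K G" and sol: "solvable (G\<lparr>carrier := K\<rparr>)"
  shows "solvable (H\<lparr>carrier := h ` K\<rparr>)"
proof -
  have "group_hom (G\<lparr>carrier := K\<rparr>) (H\<lparr>carrier := h ` K\<rparr>) h"
  proof (intro group_hom.intro group_hom_axioms.intro homI)
    show "group (G\<lparr>carrier := K\<rparr>)" using G.subgroup_imp_group[OF K] .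
    show "group (H\<lparr>carrier := h ` K\<rparr>)"
      using H.subgroup_imp_group[OF subgroup_img_is_subgroup[OF K]] .
  qed (auto simp: subgroup.mem_carrier[OF K])
  then show ?thesis using group_hom.surj_hom_imp_solvable sol by fastforce
qed

lemma (in group_hom) solvabilizer_img:
  assumes x: "x \<in> carrier G"
  shows "h ` solvabilizer G x \<subseteq> solvabilizer H (h x)"
proof
  fix z assume "z \<in> h ` solvabilizer G x"
  then obtain y where y: "y \<in> carrier G" "z = h y"
    and sol: "solvable (G\<lparr>carrier := generate G {x, y}\<rparr>)"
    unfolding solvabilizer_def by blast
  have "generate H {h x, h y} = h ` generate G {x, y}"
    using generate_img[of "{x, y}"] x y by simp
  then show "z \<in> solvabilizer H (h x)"
    using solvable_subgroup_img[OF G.generate_is_subgroup sol] x y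
    unfolding solvabilizer_def by auto
qed

lemma (in group_action) orbits_disjoint:
  assumes "x \<in> E" "y \<in> E" "y \<notin> orbit G \<phi> x"
  shows "orbit G \<phi> x \<inter> orbit G \<phi> y = {}"
proof (rule ccontr)
  assume "orbit G \<phi> x \<inter> orbit G \<phi> y \<noteq> {}"
  then obtain z where "z \<in> orbit G \<phi> x" "z \<in> orbit G \<phi> y" by blast
  moreover have "z \<in> E" using \<open>z \<in> orbit G \<phi> x\<close> assms(1) element_image
    unfolding orbit_def by blast
  ultimately show False using assms orbit_sym orbit_trans by blast
qed

lemma (in group_action) card_UN_orbits:
  assumes "finite (carrier G)" "finite I" "f ` I \<subseteq> E"
    and "\<And>i j. i \<in> I \<Longrightarrow> j \<in> I \<Longrightarrow> i \<noteq> j \<Longrightarrow> f j \<notin> orbit G \<phi> (f i)"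
  shows "card (\<Union>i\<in>I. orbit G \<phi> (f i)) = (\<Sum>i\<in>I. card (orbit G \<phi> (f i)))"
proof (rule card_UN_disjoint[OF assms(2)])
  show "\<forall>i\<in>I. finite (orbit G \<phi> (f i))"
    using assms(1) unfolding orbit_def by (simp add: setcompr_eq_image)
  show "\<forall>i\<in>I. \<forall>j\<in>I. i \<noteq> j \<longrightarrow> orbit G \<phi> (f i) \<inter> orbit G \<phi> (f j) = {}"
    using assms(3,4) orbits_disjoint by blast
qed

(* The library's action g . S = g S g^-1 of G on its subsets
   (action_by_conjugation_on_power_set); the right action S^g = set_conj G S g is inv g . S. *)
definition subset_conjugation :: "('a, 'b) monoid_scheme \<Rightarrow> 'a \<Rightarrow> 'a set \<Rightarrow> 'a set" where
  "subset_conjugation G = (\<lambda>g. \<lambda>H \<in> {H. H \<subseteq> carrier G}. g <#\<^bsub>G\<^esub> H #>\<^bsub>G\<^esub> inv\<^bsub>G\<^esub> g)"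

context group
begin

abbreviation conj_orbit :: "'a set \<Rightarrow> 'a set set" where
  "conj_orbit S \<equiv> orbit G (subset_conjugation G) S"

lemma subset_conjugation_action: "group_action G {H. H \<subseteq> carrier G} (subset_conjugation G)"
  unfolding subset_conjugation_def by (rule action_by_conjugation_on_power_set)

lemma set_conj_eq_subset_conjugation:
  assumes "S \<subseteq> carrier G" "g \<in> carrier G"
  shows "set_conj G S g = subset_conjugation G (inv g) S"
  using assms unfolding set_conj_eq_image subset_conjugation_def l_coset_def r_coset_def
  by (auto simp: m_assoc)

lemma orbit_subset_conjugation:
  assumes S: "S \<subseteq> carrier G"
  shows "conj_orbit S = set_conj G S ` carrier G"
proof -
  have "subset_conjugation G g S = set_conj G S (inv g)" if "g \<in> carrier G" for g
    using set_conj_eq_subset_conjugation[OF S, of "inv g"] that by simp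
  then have "conj_orbit S = (\<lambda>g. set_conj G S (inv g)) ` carrier G"
    unfolding orbit_def by auto
  also have "\<dots> = set_conj G S ` carrier G"
    by (auto intro!: image_eqI[of _ _ "inv _"])
  finally show ?thesis .
qed

lemma stabilizer_subset_conjugation:
  assumes S: "S \<subseteq> carrier G"
  shows "stabilizer G (subset_conjugation G) S = set_normalizer G S"
proof -
  have stab: "subgroup (stabilizer G (subset_conjugation G) S) G"
    using group_action.stabilizer_subgroup[OF subset_conjugation_action] S by simp
  have "g \<in> set_normalizer G S \<longleftrightarrow> inv g \<in> stabilizer G (subset_conjugation G) S"
    if "g \<in> carrier G" for g
    using that S by (simp add: set_normalizer_def stabilizer_def set_conj_eq_subset_conjugation)
  then show ?thesis
    using subgroup.m_inv_closed[OF stab] subgroup.mem_carrier[OF stab] inv_inv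
    unfolding set_normalizer_def by (metis (mono_tags, lifting) mem_Collect_eq subsetI subset_antisym)
qed

lemma index_set_normalizer:
  assumes S: "S \<subseteq> carrier G"
  shows "index G (set_normalizer G S) = card (conj_orbit S)"
  using bij_betw_same_card[OF group_action.orbit_stab_fun_is_bij[OF subset_conjugation_action]] S
  unfolding index_def stabilizer_subset_conjugation[OF S, symmetric] by simp

lemma conjugation_group_hom: "g \<in> carrier G \<Longrightarrow> group_hom G G (\<lambda>h. inv g \<otimes> h \<otimes> g)"
  by (intro group_hom.intro group_hom_axioms.intro homI is_group)
     (simp_all add: m_assoc, simp add: m_assoc [symmetric])

lemma solvabilizer_subset_carrier: "solvabilizer G x \<subseteq> carrier G"
  unfolding solvabilizer_def by auto

lemma solvabilizer_conj:
  assumes x: "x \<in> carrier G" and g: "g \<in> carrier G"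
  shows "solvabilizer G (inv g \<otimes> x \<otimes> g) = set_conj G (solvabilizer G x) g"
proof
  show "set_conj G (solvabilizer G x) g \<subseteq> solvabilizer G (inv g \<otimes> x \<otimes> g)"
    unfolding set_conj_eq_image
    using group_hom.solvabilizer_img[OF conjugation_group_hom[OF g] x] .
  show "solvabilizer G (inv g \<otimes> x \<otimes> g) \<subseteq> set_conj G (solvabilizer G x) g"
  proof
    fix y assume y: "y \<in> solvabilizer G (inv g \<otimes> x \<otimes> g)"
    then have y_carrier: "y \<in> carrier G" using solvabilizer_subset_carrier by blast
    have conj_conj: "g \<otimes> (inv g \<otimes> x \<otimes> g) \<otimes> inv g = x"
      using x g by (simp add: m_assoc [symmetric]) (simp add: m_assoc)
    have "g \<otimes> y \<otimes> inv g \<in> solvabilizer G x"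
      using group_hom.solvabilizer_img[OF conjugation_group_hom[OF inv_closed[OF g]],
          of "inv g \<otimes> x \<otimes> g"] x g y
      by (simp add: conj_conj image_subset_iff)
    moreover have "y = inv g \<otimes> (g \<otimes> y \<otimes> inv g) \<otimes> g"
      using g y_carrier by (simp add: m_assoc [symmetric]) (simp add: m_assoc)
    ultimately show "y \<in> set_conj G (solvabilizer G x) g"
      unfolding set_conj_eq_image by blast
  qed
qed

lemma generate_pow_coprime:
  assumes x: "x \<in> carrier G" and y: "y \<in> carrier G" and cop: "coprime (int (ord x)) i"
  shows "generate G {x [^] i, y} = generate G {x, y}"
proof -
  obtain u v where bezout: "u * int (ord x) + v * i = 1"
    using bezout_int[of "int (ord x)" i] cop by auto
  have "x = x [^] (int (ord x) * u + i * v)"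
    using bezout x by (simp add: mult.commute)
  also have "\<dots> = x [^] (int (ord x) * u) \<otimes> (x [^] i) [^] v"
    using x by (simp add: int_pow_mult int_pow_pow)
  also have "x [^] (int (ord x) * u) = \<one>"
    using x int_pow_eq_id by simp
  finally have x_eq: "x = (x [^] i) [^] v"
    using x by simp
  have "x [^] i \<in> generate G {x, y}"
    using subgroup_int_pow_closed[OF generate_is_subgroup generate.incl] x y by simp
  moreover have "x \<in> generate G {x [^] i, y}"
    using subgroup_int_pow_closed[OF generate_is_subgroup generate.incl, of "{x [^] i, y}" "x [^] i" v]
      x y x_eq by simp
  ultimately show ?thesis
    using x y
    by (intro equalityI generate_subgroup_incl generate_is_subgroup) (auto intro: generate.incl)
qed

lemma solvabilizer_pow_coprime:
  assumes "x \<in> carrier G" and "coprime (int (ord x)) i"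
  shows "solvabilizer G (x [^] i) = solvabilizer G x"
  unfolding solvabilizer_def using generate_pow_coprime[OF assms(1) _ assms(2)] by auto

lemma solvabilizer_rational_class:
  assumes r: "r \<in> carrier G" and y: "y \<in> rational_class G r"
  shows "solvabilizer G y \<in> conj_orbit (solvabilizer G r)"
proof -
  obtain i g where i: "coprime (int (ord r)) i" and g: "g \<in> carrier G"
    and y_eq: "y = inv g \<otimes> r [^] i \<otimes> g"
    using y unfolding rational_class_def conj_class_def by blast
  have "solvabilizer G y = set_conj G (solvabilizer G r) g"
    using solvabilizer_conj[of "r [^] i" g] solvabilizer_pow_coprime[OF r i] r g y_eq by simp
  then show ?thesis
    using g by (simp add: orbit_subset_conjugation solvabilizer_subset_carrier)
qed

lemma conj_orbit_solvabilizer_subset_Solv: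
  assumes "x \<in> carrier G"
  shows "conj_orbit (solvabilizer G x) \<subseteq> Solv G"
  using assms solvabilizer_conj[OF assms]
  by (auto simp: orbit_subset_conjugation solvabilizer_subset_carrier Solv_def)

lemma sol_nonconj_iff:
  "sol_nonconj G T \<longleftrightarrow>
     (\<forall>a\<in>T. \<forall>b\<in>T. a \<noteq> b \<longrightarrow> solvabilizer G a \<notin> conj_orbit (solvabilizer G b))"
  by (auto simp: sol_nonconj_def orbit_subset_conjugation solvabilizer_subset_carrier)

lemma sol_nonconj_insert:
  assumes "sol_nonconj G T"
    and new: "\<forall>x\<in>T. solvabilizer G r \<notin> conj_orbit (solvabilizer G x)"
  shows "sol_nonconj G (insert r T)"
proof -
  have "solvabilizer G b \<in> conj_orbit (solvabilizer G a)"
    if "solvabilizer G a \<in> conj_orbit (solvabilizer G b)" for a b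
    using group_action.orbit_sym[OF subset_conjugation_action] that
    by (simp add: solvabilizer_subset_carrier)
  then show ?thesis
    using assms unfolding sol_nonconj_iff by blast
qed

lemma maximal_sol_nonconj_covers:
  assumes "finite R" "\<chi> \<subseteq> R" "sol_nonconj G \<chi>"
    and maximal: "\<forall>C. C \<subseteq> R \<and> sol_nonconj G C \<longrightarrow> card C \<le> card \<chi>"
    and r: "r \<in> R"
  shows "\<exists>x\<in>\<chi>. solvabilizer G r \<in> conj_orbit (solvabilizer G x)"
proof (rule ccontr)
  assume none: "\<not> ?thesis"
  then have "r \<notin> \<chi>"
    using group_action.orbit_refl[OF subset_conjugation_action]
    by (auto simp: solvabilizer_subset_carrier)
  have "sol_nonconj G (insert r \<chi>)"
    using sol_nonconj_insert[OF assms(3)] none by blast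
  then have "card (insert r \<chi>) \<le> card \<chi>"
    using maximal assms(2) r by blast
  then show False
    using \<open>r \<notin> \<chi>\<close> finite_subset[OF assms(2,1)] by simp
qed

lemma Solv_eq_UN_conj_orbits:
  assumes R: "rational_class_reps G R" and \<chi>: "\<chi> \<subseteq> carrier G"
    and cover: "\<forall>r\<in>R. \<exists>x\<in>\<chi>. solvabilizer G r \<in> conj_orbit (solvabilizer G x)"
  shows "Solv G = (\<Union>x\<in>\<chi>. conj_orbit (solvabilizer G x))"
proof
  show "(\<Union>x\<in>\<chi>. conj_orbit (solvabilizer G x)) \<subseteq> Solv G"
    using \<chi> conj_orbit_solvabilizer_subset_Solv by blast
  show "Solv G \<subseteq> (\<Union>x\<in>\<chi>. conj_orbit (solvabilizer G x))"
  proof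
    fix S assume "S \<in> Solv G"
    then obtain y where y: "y \<in> carrier G" "S = solvabilizer G y"
      unfolding Solv_def by auto
    then obtain r where r: "r \<in> R" "r \<in> carrier G" "y \<in> rational_class G r"
      using R unfolding rational_class_reps_def by blast
    then obtain x where x: "x \<in> \<chi>" "solvabilizer G r \<in> conj_orbit (solvabilizer G x)"
      using cover by blast
    have "solvabilizer G y \<in> conj_orbit (solvabilizer G r)"
      using solvabilizer_rational_class r by blast
    then show "S \<in> (\<Union>x\<in>\<chi>. conj_orbit (solvabilizer G x))"
      using group_action.orbit_trans[OF subset_conjugation_action, of "solvabilizer G x"]
        solvabilizer_subset_carrier x y by blast
  qed
qed

end

theorem theorem6p1:
  fixes G :: "('a, 'b) monoid_scheme" and R \<chi> :: "'a set"
  assumes "group G"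
    and "finite (carrier G)"
    and "rational_class_reps G R"
    and "\<chi> \<subseteq> R"
    and "sol_nonconj G \<chi>"
    and "\<forall>C. C \<subseteq> R \<and> sol_nonconj G C \<longrightarrow> card C \<le> card \<chi>"
  shows "card (Solv G) = (\<Sum>x \<in> \<chi>. index G (set_normalizer G (solvabilizer G x)))"
proof -
  interpret group G by fact
  have R: "R \<subseteq> carrier G" "finite R"
    using assms(2,3) finite_subset unfolding rational_class_reps_def by auto
  have \<chi>: "\<chi> \<subseteq> carrier G" "finite \<chi>"
    using assms(4) R finite_subset by auto
  have "Solv G = (\<Union>x\<in>\<chi>. conj_orbit (solvabilizer G x))"
    using Solv_eq_UN_conj_orbits[OF assms(3) \<chi>(1)]
      maximal_sol_nonconj_covers[OF R(2) assms(4-6)] by blast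
  also have "card \<dots> = (\<Sum>x\<in>\<chi>. card (conj_orbit (solvabilizer G x)))"
    using assms(5) solvabilizer_subset_carrier
    by (intro group_action.card_UN_orbits[OF subset_conjugation_action assms(2) \<chi>(2)])
      (auto simp: sol_nonconj_iff)
  also have "\<dots> = (\<Sum>x\<in>\<chi>. index G (set_normalizer G (solvabilizer G x)))"
    by (simp add: index_set_normalizer solvabilizer_subset_carrier)
  finally show ?thesis .
qed
end
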